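(* Let $(E_i)_{i\in I}$ be a family of sets and $\mathcal{U}$ a uniform ultrafilter on $I$. Then the set $L=\{x : \{i\in I : x\in E_i\}\in\mathcal{U}\}$ is a diagonal of the family $(E_i)_{i\in I}$.
   Context: An ultrafilter $\mathcal{U}$ on $I$ is uniform if every $X\in\mathcal{U}$ satisfies $|X|=|I|$. For sets $F,M$ put $I[F,M]=\{i\in I: F\cap M=F\cap E_i\}$. A set $D$ is a diagonal of $(E_i)_{i\in I}$ if for every finite set $F$ one has $|I[F,D]|=|I|$. *)

theory Defs
  imports Main "HOL-Library.Equipollence"
begin

definition ultrafilter_on :: "'i set \<Rightarrow> 'i set set \<Rightarrow> bool" where
  "ultrafilter_on I U \<longleftrightarrow>
     U \<subseteq> Pow I \<and> I \<in> U \<and> {} \<notin> U \<and>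
     (\<forall>X\<in>U. \<forall>Y\<in>U. X \<inter> Y \<in> U) \<and>
     (\<forall>X\<in>U. \<forall>Y. X \<subseteq> Y \<and> Y \<subseteq> I \<longrightarrow> Y \<in> U) \<and>
     (\<forall>X. X \<subseteq> I \<longrightarrow> X \<in> U \<or> I - X \<in> U)"

definition uniform_ultrafilter_on :: "'i set \<Rightarrow> 'i set set \<Rightarrow> bool" where
  "uniform_ultrafilter_on I U \<longleftrightarrow> ultrafilter_on I U \<and> (\<forall>X\<in>U. X \<approx> I)"

definition Iset :: "'i set \<Rightarrow> ('i \<Rightarrow> 'a set) \<Rightarrow> 'a set \<Rightarrow> 'a set \<Rightarrow> 'i set" where
  "Iset I E F M = {i \<in> I. F \<inter> M = F \<inter> E i}"

definition diagonal :: "'i set \<Rightarrow> ('i \<Rightarrow> 'a set) \<Rightarrow> 'a set \<Rightarrow> bool" where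
  "diagonal I E D \<longleftrightarrow> (\<forall>F. finite F \<longrightarrow> Iset I E F D \<approx> I)"

end

theory Submission
  imports Defs
begin

text \<open>For each x the indices i at which E i agrees with L at x form a set of the ultrafilter,
  by the ultrafilter dichotomy for the set of i with x in E i. For finite F, the set of i where
  E i agrees with L on all of F is the intersection of finitely many such sets, so it is again
  in the ultrafilter, and uniformity makes it as large as I.\<close>

lemma ultrafilter_on_Int:
  "ultrafilter_on I U \<Longrightarrow> X \<in> U \<Longrightarrow> Y \<in> U \<Longrightarrow> X \<inter> Y \<in> U"
  unfolding ultrafilter_on_def by blast

lemma ultrafilter_on_Diff:
  "ultrafilter_on I U \<Longrightarrow> X \<subseteq> I \<Longrightarrow> X \<notin> U \<Longrightarrow> I - X \<in> U"
  unfolding ultrafilter_on_def by blast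

lemma ultrafilter_on_INT:
  assumes "ultrafilter_on I U" and "finite F" and "\<And>x. x \<in> F \<Longrightarrow> B x \<in> U"
  shows "I \<inter> (\<Inter>x\<in>F. B x) \<in> U"
  using assms(2,3)
proof (induction F rule: finite_induct)
  case empty
  then show ?case using assms(1) by (simp add: ultrafilter_on_def)
next
  case (insert a F)
  have "I \<inter> (\<Inter>x\<in>insert a F. B x) = B a \<inter> (I \<inter> (\<Inter>x\<in>F. B x))" by auto
  with insert show ?case using ultrafilter_on_Int[OF assms(1)] by simp
qed

lemma ultrafilter_on_agreement_set:
  assumes "ultrafilter_on I U"
  shows "{i \<in> I. x \<in> E i \<longleftrightarrow> x \<in> {y. {i \<in> I. y \<in> E i} \<in> U}} \<in> U"
proof (cases "{i \<in> I. x \<in> E i} \<in> U")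
  case True
  then show ?thesis by simp
next
  case False
  then have "I - {i \<in> I. x \<in> E i} \<in> U" by (rule ultrafilter_on_Diff[OF assms, rotated]) blast
  moreover have "I - {i \<in> I. x \<in> E i} = {i \<in> I. x \<notin> E i}" by blast
  ultimately show ?thesis using False by simp
qed

lemma Iset_ultrafilter_limit_in_ultrafilter:
  assumes "ultrafilter_on I U" and "finite F"
  shows "Iset I E F {x. {i \<in> I. x \<in> E i} \<in> U} \<in> U"
proof -
  let ?L = "{x. {i \<in> I. x \<in> E i} \<in> U}"
  have "Iset I E F ?L = I \<inter> (\<Inter>x\<in>F. {i \<in> I. x \<in> E i \<longleftrightarrow> x \<in> ?L})"
    unfolding Iset_def by blast
  also have "\<dots> \<in> U"
    by (rule ultrafilter_on_INT[OF assms]) (rule ultrafilter_on_agreement_set[OF assms(1)])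
  finally show ?thesis .
qed

theorem mainTheorem6:
  fixes I :: "'i set" and E :: "'i \<Rightarrow> 'a set" and U :: "'i set set"
  assumes "uniform_ultrafilter_on I U"
  shows "diagonal I E {x. {i \<in> I. x \<in> E i} \<in> U}"
proof -
  from assms have "ultrafilter_on I U" and "\<forall>X\<in>U. X \<approx> I"
    by (simp_all add: uniform_ultrafilter_on_def)
  then show ?thesis
    unfolding diagonal_def using Iset_ultrafilter_limit_in_ultrafilter by blast
qed

end
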